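(* Let $X\in\mathbb{R}^{m\times n}_+$, $W\in\mathbb{R}^{m\times r}$, $H\in\mathbb{R}^{r\times n}_+$ with $X=WH$ satisfying the facet-based conditions (FBC) for some parameter $s$, where $d=\operatorname{rank}(X)$, and assume $X$ has no duplicated columns. Let $\bar x=\frac1n\sum_{j=1}^n X(:,j)$, $e$ the all-ones vector, and assume $X-\bar x e^\top$ has rank $d-1$ with compact SVD $X-\bar xe^\top=U\Sigma V^\top$, $U\in\mathbb{R}^{m\times(d-1)}$. Let $\tilde X=U^\top(X-\bar xe^\top)\in\mathbb{R}^{(d-1)\times n}$ and $\tilde W=U^\top(W-\bar xe^\top)$. Then, for $\theta\in\mathbb{R}^{d-1}$, the set $\{x\in\operatorname{conv}(\tilde W): \theta^\top x=1\}$ is a facet of $\operatorname{conv}(\tilde W)$ if and only if $\theta$ is a vertex of $\operatorname{conv}(\tilde X)^*=\{\theta:\tilde X^\top\theta\le e\}$ and $\big|\{j: \tilde X(:,j)^\top\theta=1\}\big|\ge s$.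
   Context: For a matrix $M$, $\operatorname{conv}(M)$ denotes the convex hull of its columns. For a set $\mathcal A$ containing the origin in its interior, its dual is $\mathcal A^*=\{y: x^\top y\le 1 \text{ for all } x\in\mathcal A\}$. $|\mathcal A|$ denotes cardinality. A facet of a polytope is a face of dimension one less than the dimension of the polytope. The unit simplex is $\Delta^r=\{x\in\mathbb{R}^r: x\ge 0,\ \sum_i x_i=1\}$. Facet-based conditions (FBC) with parameter $s$ for $X=WH$, where $d=\operatorname{rank}(X)$: (a) no column of $W$ lies in the convex hull of the other columns of $W$; (b) $H(:,j)\in\Delta^r$ for all $j$; (c) each facet of $\operatorname{conv}(W)$ contains at least $s\ge d$ distinct columns of $X$, and among them at least $d-1$ generate that facet (the convex hull of these $s$ columns has dimension $d-2$); (d) every facet of $\operatorname{conv}(X)$ which is not a facet of $\operatorname{conv}(W)$ contains strictly fewer than $s$ distinct columns of $X$. *)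

theory Defs
  imports "HOL-Analysis.Analysis"
begin

definition dual_set :: "('a::real_inner) set \<Rightarrow> 'a set" where
  "dual_set A = {y. \<forall>x\<in>A. inner x y \<le> 1}"

definition FBC :: "real^'n^'m \<Rightarrow> real^'r^'m \<Rightarrow> real^'n^'r \<Rightarrow> nat \<Rightarrow> bool" where
  "FBC X W H s \<longleftrightarrow>
     X = W ** H \<and> s \<ge> rank X \<and>
     \<comment> \<open>(a)\<close>
     (\<forall>k. column k W \<notin> convex hull ((\<lambda>l. column l W) ` (UNIV - {k}))) \<and>
     \<comment> \<open>(b)\<close>
     (\<forall>j. (\<forall>i. H $ i $ j \<ge> 0) \<and> (\<Sum>i\<in>UNIV. H $ i $ j) = 1) \<and>
     \<comment> \<open>(c)\<close>
     (\<forall>F. F facet_of convex hull (columns W) \<longrightarrow>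
          s \<le> card (columns X \<inter> F) \<and> affine hull (columns X \<inter> F) = affine hull F) \<and>
     \<comment> \<open>(d)\<close>
     (\<forall>G. G facet_of convex hull (columns X) \<and> \<not> G facet_of convex hull (columns W) \<longrightarrow>
          card (columns X \<inter> G) < s)"

end

theory Submission
  imports Defs
begin

text \<open>
  Of the singular value decomposition only \<open>U\<^sup>T U = I\<close> and the rank of the centred matrix are
  needed. The injective affine map \<open>z \<mapsto> x\<^sub>0 + U z\<close> (\<open>x\<^sub>0\<close> the mean column) carries the columns
  of \<open>X~\<close> and \<open>W~\<close> onto those of \<open>X\<close> and \<open>W\<close>: the columns of \<open>X\<close> lie in its range by the
  decomposition, and each column of \<open>W\<close> is a vertex of \<open>conv W\<close> by (a), hence lies on a facet,
  hence by (c) in the affine hull of the columns of \<open>X\<close>. So (c) and (d) hold for the point sets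
  \<open>P\<close> and \<open>Q\<close> of columns of \<open>X~\<close> and \<open>W~\<close>, where moreover \<open>0 \<in> conv P\<close> (the columns of \<open>X~\<close>
  sum to zero) and \<open>P\<close> spans the whole space.

  For such \<open>P\<close>, \<open>\<theta>\<close> is a vertex of the polar \<open>{\<theta>. \<forall>p\<in>P. p \<bullet> \<theta> \<le> 1}\<close> iff the active points
  \<open>p \<bullet> \<theta> = 1\<close> span the space, i.e. iff the hyperplane \<open>\<theta> \<bullet> x = 1\<close> supports \<open>conv P\<close> in a facet.
  If that hyperplane cuts a facet of \<open>conv Q\<close>, then \<open>\<theta> \<bullet> x \<le> 1\<close> on \<open>conv Q \<ni> 0\<close>, since a
  segment from \<open>0\<close> cannot cross a face in its interior; by (c) the facet contains at least \<open>s\<close>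
  points of \<open>P\<close> with full affine hull, so \<open>\<theta>\<close> is a vertex of the polar. Conversely, the facet of
  \<open>conv P\<close> exposed by a vertex \<open>\<theta>\<close> contains at least \<open>s\<close> points of \<open>P\<close>, so by (d) it is a facet
  of \<open>conv Q\<close>, and a facet lying in the hyperplane is the whole section of \<open>conv Q\<close> by it.
\<close>

section \<open>Vertices of the polar of a finite point set\<close>

lemma dual_set_convex_hull:
  fixes P :: "'a::real_inner set"
  shows "dual_set (convex hull P) = {\<theta>. \<forall>p\<in>P. p \<bullet> \<theta> \<le> 1}"
proof -
  have "convex hull P \<subseteq> {x. x \<bullet> \<theta> \<le> 1} \<longleftrightarrow> P \<subseteq> {x. x \<bullet> \<theta> \<le> 1}" for \<theta> :: 'a
    by (rule subset_hull) (simp add: convex_halfspace_le inner_commute[of _ \<theta>])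
  then show ?thesis
    unfolding dual_set_def by blast
qed

lemma polar_perturbation:
  fixes P :: "'a::real_inner set"
  assumes "finite P" and feasible: "\<forall>p\<in>P. p \<bullet> \<theta> \<le> 1"
    and orth: "\<forall>p\<in>P. p \<bullet> \<theta> = 1 \<longrightarrow> p \<bullet> v = 0"
  obtains e where "e > 0" and "\<And>t p. \<bar>t\<bar> \<le> e \<Longrightarrow> p \<in> P \<Longrightarrow> p \<bullet> (\<theta> + t *\<^sub>R v) \<le> 1"
proof -
  define e where
    "e = Min (insert 1 ((\<lambda>p. (1 - p \<bullet> \<theta>) / (\<bar>p \<bullet> v\<bar> + 1)) ` {p\<in>P. p \<bullet> \<theta> < 1}))"
  have "e > 0"
    using \<open>finite P\<close> by (auto simp: e_def add_pos_nonneg)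
  moreover have "p \<bullet> (\<theta> + t *\<^sub>R v) \<le> 1" if t: "\<bar>t\<bar> \<le> e" and "p \<in> P" for t p
  proof (cases "p \<bullet> \<theta> = 1")
    case True
    then show ?thesis
      using orth \<open>p \<in> P\<close> by (simp add: inner_add_right)
  next
    case False
    with feasible \<open>p \<in> P\<close> have "p \<bullet> \<theta> < 1"
      by fastforce
    then have "e \<le> (1 - p \<bullet> \<theta>) / (\<bar>p \<bullet> v\<bar> + 1)"
      unfolding e_def using \<open>finite P\<close> \<open>p \<in> P\<close> by (intro Min_le) auto
    then have "e * (\<bar>p \<bullet> v\<bar> + 1) \<le> 1 - p \<bullet> \<theta>"
      by (simp add: pos_le_divide_eq add_pos_nonneg)
    moreover have "t * (p \<bullet> v) \<le> e * (\<bar>p \<bullet> v\<bar> + 1)"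
    proof -
      have "t * (p \<bullet> v) \<le> \<bar>t\<bar> * \<bar>p \<bullet> v\<bar>"
        by (metis abs_ge_self abs_mult)
      also have "\<dots> \<le> e * (\<bar>p \<bullet> v\<bar> + 1)"
        using t by (intro mult_mono) auto
      finally show ?thesis .
    qed
    ultimately show ?thesis
      by (simp add: inner_add_right)
  qed
  ultimately show ?thesis
    using that by blast
qed

lemma span_active_eq_UNIV_if_extreme_point_of_polar:
  fixes P :: "'a::euclidean_space set"
  assumes "finite P" and vertex: "\<theta> extreme_point_of {\<theta>. \<forall>p\<in>P. p \<bullet> \<theta> \<le> 1}"
  shows "span {p\<in>P. p \<bullet> \<theta> = 1} = UNIV"
proof (rule ccontr)
  let ?D = "{\<theta>. \<forall>p\<in>P. p \<bullet> \<theta> \<le> 1}"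
  assume "span {p\<in>P. p \<bullet> \<theta> = 1} \<noteq> UNIV"
  then obtain v where "v \<noteq> 0" and v: "\<forall>x\<in>span {p\<in>P. p \<bullet> \<theta> = 1}. v \<bullet> x = 0"
    using span_not_UNIV_orthogonal by blast
  then have "\<forall>p\<in>P. p \<bullet> \<theta> = 1 \<longrightarrow> p \<bullet> v = 0"
    by (simp add: span_base inner_commute)
  moreover have "\<forall>p\<in>P. p \<bullet> \<theta> \<le> 1"
    using vertex by (simp add: extreme_point_of_def)
  ultimately obtain e where "e > 0"
    and e: "\<And>t p. \<bar>t\<bar> \<le> e \<Longrightarrow> p \<in> P \<Longrightarrow> p \<bullet> (\<theta> + t *\<^sub>R v) \<le> 1"
    using polar_perturbation[OF \<open>finite P\<close>] by blast
  have "(- e) *\<^sub>R v \<noteq> e *\<^sub>R v"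
    using \<open>v \<noteq> 0\<close> \<open>e > 0\<close> by (simp only: scaleR_cancel_right) simp
  then have "\<theta> + (- e) *\<^sub>R v \<noteq> \<theta> + e *\<^sub>R v"
    by simp
  moreover have "midpoint (\<theta> + (- e) *\<^sub>R v) (\<theta> + e *\<^sub>R v) = \<theta>"
    by (simp add: midpoint_def scaleR_add_right flip: scaleR_add_left)
  ultimately have "\<theta> \<in> open_segment (\<theta> + (- e) *\<^sub>R v) (\<theta> + e *\<^sub>R v)"
    by (metis midpoint_in_open_segment)
  moreover have "\<theta> + (- e) *\<^sub>R v \<in> ?D" "\<theta> + e *\<^sub>R v \<in> ?D"
    using e[of "- e"] e[of e] \<open>e > 0\<close> by auto
  ultimately show False
    using vertex unfolding extreme_point_of_def by blast
qed

lemma extreme_point_of_polarI: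
  fixes P :: "'a::euclidean_space set"
  assumes feasible: "\<forall>p\<in>P. p \<bullet> \<theta> \<le> 1" and spanning: "span {p\<in>P. p \<bullet> \<theta> = 1} = UNIV"
  shows "\<theta> extreme_point_of {\<theta>. \<forall>p\<in>P. p \<bullet> \<theta> \<le> 1}" (is "_ extreme_point_of ?D")
  unfolding extreme_point_of_def
proof (intro conjI ballI notI)
  show "\<theta> \<in> ?D"
    using feasible by simp
  fix a b
  assume "a \<in> ?D" "b \<in> ?D" "\<theta> \<in> open_segment a b"
  then obtain u where "a \<noteq> b" "0 < u" "u < 1" and \<theta>: "\<theta> = (1 - u) *\<^sub>R a + u *\<^sub>R b"
    by (auto simp: in_segment)
  have "orthogonal (a - b) p" if "p \<in> P" "p \<bullet> \<theta> = 1" for p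
  proof -
    have "p \<bullet> a \<le> 1" "p \<bullet> b \<le> 1"
      using \<open>a \<in> ?D\<close> \<open>b \<in> ?D\<close> \<open>p \<in> P\<close> by auto
    moreover have "(1 - u) * (p \<bullet> a) + u * (p \<bullet> b) = 1"
      using \<open>p \<bullet> \<theta> = 1\<close> unfolding \<theta> by (simp add: inner_add_right)
    then have "(1 - u) * (1 - p \<bullet> a) + u * (1 - p \<bullet> b) = 0"
      by (simp add: algebra_simps)
    ultimately have "(1 - u) * (1 - p \<bullet> a) = 0" "u * (1 - p \<bullet> b) = 0"
      using \<open>0 < u\<close> \<open>u < 1\<close> by (simp_all add: add_nonneg_eq_0_iff)
    then have "p \<bullet> a = 1" "p \<bullet> b = 1"
      using \<open>0 < u\<close> \<open>u < 1\<close> by simp_all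
    then show ?thesis
      by (simp add: orthogonal_def inner_diff_left inner_commute[of p])
  qed
  then have "orthogonal (a - b) (a - b)"
    using orthogonal_to_span[of "a - b" "{p\<in>P. p \<bullet> \<theta> = 1}" "a - b"] spanning by simp
  with \<open>a \<noteq> b\<close> show False
    by (simp add: orthogonal_self)
qed

lemma extreme_point_of_polar_iff:
  fixes P :: "'a::euclidean_space set"
  assumes "finite P"
  shows "\<theta> extreme_point_of {\<theta>. \<forall>p\<in>P. p \<bullet> \<theta> \<le> 1} \<longleftrightarrow>
         (\<forall>p\<in>P. p \<bullet> \<theta> \<le> 1) \<and> span {p\<in>P. p \<bullet> \<theta> = 1} = UNIV"
  using span_active_eq_UNIV_if_extreme_point_of_polar[OF assms] extreme_point_of_polarI[of P \<theta>]
  by (auto simp: extreme_point_of_def)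

section \<open>Facets cut out by hyperplanes\<close>

lemma face_of_level_set_imp_le:
  fixes S :: "'a::real_inner set"
  assumes "convex S" "0 \<in> S" and face: "{x\<in>S. \<theta> \<bullet> x = 1} face_of S" and "x \<in> S"
  shows "\<theta> \<bullet> x \<le> 1"
proof (rule ccontr)
  assume "\<not> \<theta> \<bullet> x \<le> 1"
  define t where "t = 1 / (\<theta> \<bullet> x)"
  have "0 < t" "t < 1" "x \<noteq> 0"
    using \<open>\<not> \<theta> \<bullet> x \<le> 1\<close> by (auto simp: t_def)
  have "t *\<^sub>R x \<in> open_segment 0 x"
    unfolding in_segment using \<open>0 < t\<close> \<open>t < 1\<close> \<open>x \<noteq> 0\<close> by (intro conjI exI[of _ t]) auto
  moreover have "t *\<^sub>R x \<in> {x\<in>S. \<theta> \<bullet> x = 1}"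
    using convexD[OF \<open>convex S\<close> \<open>0 \<in> S\<close> \<open>x \<in> S\<close>, of "1 - t" t] \<open>0 < t\<close> \<open>t < 1\<close> \<open>\<not> \<theta> \<bullet> x \<le> 1\<close>
    by (auto simp: t_def)
  ultimately have "x \<in> {x\<in>S. \<theta> \<bullet> x = 1}"
    using face_ofD[OF face] \<open>0 \<in> S\<close> \<open>x \<in> S\<close> by blast
  with \<open>\<not> \<theta> \<bullet> x \<le> 1\<close> show False
    by simp
qed

lemma span_eq_UNIV_iff_aff_dim:
  fixes A :: "'a::euclidean_space set"
  assumes "A \<subseteq> {x. \<theta> \<bullet> x = 1}"
  shows "span A = UNIV \<longleftrightarrow> aff_dim A = int DIM('a) - 1"
proof -
  have "affine hull A \<subseteq> {x. \<theta> \<bullet> x = 1}"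
    using assms by (simp add: affine_hyperplane hull_minimal)
  then have "0 \<notin> affine hull A"
    by auto
  then have "aff_dim A + 1 = aff_dim (insert 0 A)"
    by (simp add: aff_dim_insert)
  also have "\<dots> = int (dim A)"
    by (simp add: aff_dim_zero hull_inc dim_insert span_zero)
  finally have "aff_dim A = int (dim A) - 1"
    by linarith
  then show ?thesis
    by (simp add: dim_eq_full[symmetric])
qed

lemma facet_of_convex_hull_level_set:
  fixes P :: "'a::euclidean_space set"
  assumes "aff_dim (convex hull P) = DIM('a)" and feasible: "\<forall>p\<in>P. p \<bullet> \<theta> \<le> 1"
    and spanning: "span {p\<in>P. p \<bullet> \<theta> = 1} = UNIV"
  shows "{x \<in> convex hull P. \<theta> \<bullet> x = 1} facet_of convex hull P"
proof -
  let ?F = "{x \<in> convex hull P. \<theta> \<bullet> x = 1}"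
  have "\<theta> \<in> dual_set (convex hull P)"
    using feasible by (simp add: dual_set_convex_hull)
  then have "\<forall>x\<in>convex hull P. \<theta> \<bullet> x \<le> 1"
    by (simp add: dual_set_def inner_commute)
  then have "convex hull P \<inter> {x. \<theta> \<bullet> x = 1} face_of convex hull P"
    by (intro face_of_Int_supporting_hyperplane_le) auto
  moreover have "convex hull P \<inter> {x. \<theta> \<bullet> x = 1} = ?F"
    by auto
  ultimately have "?F face_of convex hull P"
    by simp
  moreover have "{p\<in>P. p \<bullet> \<theta> = 1} \<subseteq> ?F"
    by (auto simp: hull_inc inner_commute)
  then have "span ?F = UNIV"
    using span_mono spanning by (metis top.extremum_unique)
  then have "aff_dim ?F = int DIM('a) - 1"
    by (subst span_eq_UNIV_iff_aff_dim[symmetric]) auto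
  moreover from this have "?F \<noteq> {}"
    using DIM_positive[where 'a='a] by (intro notI) simp
  ultimately show ?thesis
    using assms(1) by (auto simp: facet_of_def)
qed

lemma facet_eq_level_set:
  fixes S :: "'a::euclidean_space set"
  assumes "convex S" "aff_dim S = DIM('a)" and facet: "F facet_of S"
    and level: "F \<subseteq> {x. \<theta> \<bullet> x = 1}"
  shows "F = {x \<in> S. \<theta> \<bullet> x = 1}"
proof -
  have "F \<noteq> {}"
    using facet by (simp add: facet_of_def)
  with level have "\<theta> \<noteq> 0"
    by auto
  have "affine hull F = {x. \<theta> \<bullet> x = 1}"
  proof (rule affine_dim_equal)
    show "affine hull F \<subseteq> {x. \<theta> \<bullet> x = 1}"
      using level by (simp add: affine_hyperplane hull_minimal)
    show "aff_dim (affine hull F) = aff_dim {x. \<theta> \<bullet> x = 1}"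
      using facet assms(2) \<open>\<theta> \<noteq> 0\<close> by (simp add: facet_of_def)
  qed (use \<open>F \<noteq> {}\<close> in \<open>simp_all add: affine_hyperplane\<close>)
  moreover have "F = affine hull F \<inter> S"
    using face_of_imp_eq_affine_Int[OF \<open>convex S\<close>] facet by (simp add: facet_of_def)
  ultimately show ?thesis
    by auto
qed

text \<open>Conditions (c) and (d) of the FBC, for a set \<open>P\<close> of data points and a set \<open>Q\<close> of vertices.\<close>

definition facet_conditions :: "nat \<Rightarrow> 'a::euclidean_space set \<Rightarrow> 'a set \<Rightarrow> bool" where
  "facet_conditions s P Q \<longleftrightarrow>
     (\<forall>F. F facet_of convex hull Q \<longrightarrow>
          s \<le> card (P \<inter> F) \<and> affine hull (P \<inter> F) = affine hull F) \<and>
     (\<forall>G. G facet_of convex hull P \<and> \<not> G facet_of convex hull Q \<longrightarrow> card (P \<inter> G) < s)"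

lemma aff_dim_convex_hull_eq_DIM:
  fixes P Q :: "'a::euclidean_space set"
  assumes "0 \<in> convex hull P" "span P = UNIV" "P \<subseteq> convex hull Q"
  shows "aff_dim (convex hull Q) = DIM('a)"
proof -
  have "aff_dim P = int (dim P)"
    using assms(1) convex_hull_subset_affine_hull by (blast intro: aff_dim_zero)
  then have "aff_dim P = DIM('a)"
    using assms(2) by (simp add: dim_eq_full)
  moreover have "aff_dim P \<le> aff_dim (convex hull Q)"
    using assms(3) by (simp add: aff_dim_subset)
  ultimately show ?thesis
    using aff_dim_le_DIM[of "convex hull Q"] by linarith
qed

lemma polar_vertex_if_facet_of:
  fixes P Q :: "'a::euclidean_space set"
  assumes "finite P" and PQ: "P \<subseteq> convex hull Q" and "0 \<in> convex hull P" "span P = UNIV"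
    and conds: "facet_conditions s P Q"
    and facet: "{x \<in> convex hull Q. \<theta> \<bullet> x = 1} facet_of convex hull Q" (is "?F facet_of _")
  shows "\<theta> extreme_point_of dual_set (convex hull P) \<and> s \<le> card {p\<in>P. p \<bullet> \<theta> = 1}"
proof -
  define A where "A = {p\<in>P. p \<bullet> \<theta> = 1}"
  have "0 \<in> convex hull Q"
    using \<open>0 \<in> convex hull P\<close> PQ hull_minimal[of P "convex hull Q" convex] by auto
  then have "\<theta> \<bullet> x \<le> 1" if "x \<in> convex hull Q" for x
    using face_of_level_set_imp_le[OF convex_convex_hull _ _ that] facet by (auto simp: facet_of_def)
  then have "\<forall>p\<in>P. p \<bullet> \<theta> \<le> 1"
    using PQ by (auto simp: inner_commute)
  moreover have "P \<inter> ?F = A"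
    using PQ by (auto simp: A_def inner_commute)
  with conds facet have "s \<le> card A" "affine hull A = affine hull ?F"
    by (auto simp: facet_conditions_def)
  moreover from this(2) have "aff_dim A = int DIM('a) - 1"
    using facet aff_dim_convex_hull_eq_DIM[OF \<open>0 \<in> convex hull P\<close> \<open>span P = UNIV\<close> PQ]
    by (metis aff_dim_affine_hull facet_of_def)
  then have "span A = UNIV"
    by (subst span_eq_UNIV_iff_aff_dim) (auto simp: A_def inner_commute)
  ultimately show ?thesis
    unfolding dual_set_convex_hull extreme_point_of_polar_iff[OF \<open>finite P\<close>] by (simp add: A_def)
qed

lemma facet_of_if_polar_vertex:
  fixes P Q :: "'a::euclidean_space set"
  assumes "finite P" and PQ: "P \<subseteq> convex hull Q" and "0 \<in> convex hull P" "span P = UNIV"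
    and conds: "facet_conditions s P Q"
    and "\<theta> extreme_point_of dual_set (convex hull P)" and "s \<le> card {p\<in>P. p \<bullet> \<theta> = 1}"
  shows "{x \<in> convex hull Q. \<theta> \<bullet> x = 1} facet_of convex hull Q"
proof -
  let ?G = "{x \<in> convex hull P. \<theta> \<bullet> x = 1}"
  have "\<forall>p\<in>P. p \<bullet> \<theta> \<le> 1" "span {p\<in>P. p \<bullet> \<theta> = 1} = UNIV"
    using assms(6) by (simp_all add: dual_set_convex_hull extreme_point_of_polar_iff[OF \<open>finite P\<close>])
  then have "?G facet_of convex hull P"
    by (rule facet_of_convex_hull_level_set[OF
          aff_dim_convex_hull_eq_DIM[OF \<open>0 \<in> convex hull P\<close> \<open>span P = UNIV\<close> hull_subset]])
  moreover have "P \<inter> ?G = {p\<in>P. p \<bullet> \<theta> = 1}"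
    by (auto simp: hull_inc inner_commute)
  ultimately have "?G facet_of convex hull Q"
    using conds assms(7) by (force simp: facet_conditions_def)
  moreover from this have "?G = {x \<in> convex hull Q. \<theta> \<bullet> x = 1}"
    using aff_dim_convex_hull_eq_DIM[OF \<open>0 \<in> convex hull P\<close> \<open>span P = UNIV\<close> PQ]
    by (intro facet_eq_level_set) auto
  ultimately show ?thesis
    by simp
qed

theorem facet_of_iff_polar_vertex:
  fixes P Q :: "'a::euclidean_space set"
  assumes "finite P" "P \<subseteq> convex hull Q" "0 \<in> convex hull P" "span P = UNIV"
    and "facet_conditions s P Q"
  shows "{x \<in> convex hull Q. \<theta> \<bullet> x = 1} facet_of convex hull Q \<longleftrightarrow>
         \<theta> extreme_point_of dual_set (convex hull P) \<and> s \<le> card {p\<in>P. p \<bullet> \<theta> = 1}"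
  using polar_vertex_if_facet_of[OF assms] facet_of_if_polar_vertex[OF assms] by blast

lemma extreme_point_in_affine_hull:
  fixes P Q :: "'a::euclidean_space set"
  assumes "finite Q" "P \<noteq> {}" "P \<subseteq> convex hull Q" and conds: "facet_conditions s P Q"
    and vertex: "v extreme_point_of convex hull Q"
  shows "v \<in> affine hull P"
proof (cases "convex hull Q = {v}")
  case True
  with assms(2,3) have "v \<in> P"
    by auto
  then show ?thesis
    by (rule hull_inc)
next
  case False
  have "polyhedron (convex hull Q)"
    using \<open>finite Q\<close> by (simp add: polytope_imp_polyhedron polytope_convex_hull)
  moreover have "{v} face_of convex hull Q"
    using vertex by (simp add: face_of_singleton)
  ultimately obtain F where "F facet_of convex hull Q" "v \<in> F"
    using face_of_polyhedron_subset_facet False by (metis insert_not_empty insert_subset)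
  then have "v \<in> affine hull (P \<inter> F)"
    using conds by (auto simp: facet_conditions_def hull_inc)
  then show ?thesis
    using hull_mono[of "P \<inter> F" P] by blast
qed

section \<open>Injective affine maps\<close>

lemma image_affine_map: "(\<lambda>x. c + f x) ` S = (+) c ` f ` S"
  by (simp add: image_image)

lemma convex_hull_affine_image:
  assumes "linear f"
  shows "convex hull ((\<lambda>x. c + f x) ` S) = (\<lambda>x. c + f x) ` (convex hull S)"
  by (simp only: image_affine_map[of c f] convex_hull_translation convex_hull_linear_image[OF assms])

lemma affine_hull_affine_image:
  fixes f :: "'a::euclidean_space \<Rightarrow> 'b::real_normed_vector"
  assumes "linear f"
  shows "affine hull ((\<lambda>x. c + f x) ` S) = (\<lambda>x. c + f x) ` (affine hull S)"
  using assms
  by (simp only: image_affine_map[of c f] affine_hull_translation linear_conv_bounded_linear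
      affine_hull_linear_image)

lemma affine_range_affine_map:
  assumes "linear f"
  shows "affine (range (\<lambda>x. c + f x))"
proof -
  have "affine (range f)"
    using assms by (simp add: subspace_imp_affine linear_subspace_image)
  then show ?thesis
    using affine_translation[of "range f" c] by (simp add: image_image)
qed

lemma facet_of_affine_image_iff:
  fixes f :: "'a::euclidean_space \<Rightarrow> 'b::euclidean_space"
  assumes "linear f" "inj f"
  shows "(\<lambda>x. c + f x) ` F facet_of (\<lambda>x. c + f x) ` S \<longleftrightarrow> F facet_of S"
  unfolding facet_of_def image_affine_map[of c f] aff_dim_translation_eq face_of_translation_eq
  using assms by (simp add: face_of_linear_image aff_dim_injective_linear_image)

lemma facet_conditions_affine_preimage:
  fixes f :: "'a::euclidean_space \<Rightarrow> 'b::euclidean_space"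
  assumes "linear f" "inj f"
    and conds: "facet_conditions s ((\<lambda>x. c + f x) ` P) ((\<lambda>x. c + f x) ` Q)"
  shows "facet_conditions s P Q"
proof -
  define g where "g = (\<lambda>x. c + f x)"
  have "inj g"
    using \<open>inj f\<close> by (simp add: g_def inj_def)
  then have g_Int: "g ` A \<inter> g ` B = g ` (A \<inter> B)" and g_card: "card (g ` A) = card A"
    and g_eq: "g ` A = g ` B \<longleftrightarrow> A = B" for A B
    by (simp_all add: image_Int card_image inj_on_subset inj_image_eq_iff)
  have hulls: "convex hull (g ` S) = g ` (convex hull S)" "affine hull (g ` S) = g ` (affine hull S)"
    and facet: "g ` F facet_of g ` S \<longleftrightarrow> F facet_of S" for F S
    using assms(1,2) by (simp_all add: g_def convex_hull_affine_image affine_hull_affine_image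
        facet_of_affine_image_iff)
  show ?thesis
    unfolding facet_conditions_def
  proof (rule conjI; intro allI impI)
    fix F
    assume "F facet_of convex hull Q"
    then have "g ` F facet_of convex hull (g ` Q)"
      by (simp add: hulls facet)
    with conds have "s \<le> card (g ` P \<inter> g ` F) \<and> affine hull (g ` P \<inter> g ` F) = affine hull (g ` F)"
      by (simp add: facet_conditions_def g_def)
    then show "s \<le> card (P \<inter> F) \<and> affine hull (P \<inter> F) = affine hull F"
      by (simp add: g_Int g_card hulls g_eq)
  next
    fix G
    assume "G facet_of convex hull P \<and> \<not> G facet_of convex hull Q"
    then have "g ` G facet_of convex hull (g ` P) \<and> \<not> g ` G facet_of convex hull (g ` Q)"
      by (simp add: hulls facet)
    with conds have "card (g ` P \<inter> g ` G) < s"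
      by (simp add: facet_conditions_def g_def)
    then show "card (P \<inter> G) < s"
      by (simp add: g_Int g_card)
  qed
qed

lemma facet_of_iff_polar_vertex_affine_image:
  fixes f :: "'a::euclidean_space \<Rightarrow> 'b::euclidean_space"
  assumes "linear f" "inj f" "finite P" "0 \<in> convex hull P" "span P = UNIV"
    and hull: "(\<lambda>x. c + f x) ` P \<subseteq> convex hull ((\<lambda>x. c + f x) ` Q)"
    and conds: "facet_conditions s ((\<lambda>x. c + f x) ` P) ((\<lambda>x. c + f x) ` Q)"
  shows "{x \<in> convex hull Q. \<theta> \<bullet> x = 1} facet_of convex hull Q \<longleftrightarrow>
         \<theta> extreme_point_of dual_set (convex hull P) \<and> s \<le> card {p\<in>P. p \<bullet> \<theta> = 1}"
proof (rule facet_of_iff_polar_vertex)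
  have "inj (\<lambda>x. c + f x)"
    using \<open>inj f\<close> by (simp add: inj_def)
  then show "P \<subseteq> convex hull Q"
    using hull by (simp add: convex_hull_affine_image[OF \<open>linear f\<close>] inj_image_subset_iff)
  show "facet_conditions s P Q"
    using facet_conditions_affine_preimage[OF \<open>linear f\<close> \<open>inj f\<close> conds] .
qed (use assms in auto)

section \<open>Columns of matrices\<close>

lemma column_matrix_mult: "column j (A ** B) = A *v column j B"
  by (simp add: column_def matrix_matrix_mult_def matrix_vector_mult_def vec_eq_iff)

lemma column_diff: "column j (A - B) = column j A - column j B"
  by (simp add: column_def vec_eq_iff)

lemma column_constant: "column j (\<chi> i k. c $ i) = c"
  by (simp add: column_def vec_eq_iff)

lemma columns_eq_range: "columns A = range (\<lambda>j. column j A)"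
  by (auto simp: columns_def)

lemma sum_columns_matrix_mult:
  fixes A :: "real^'m^'k" and B :: "real^'n^'m"
  shows "(\<Sum>j\<in>UNIV. column j (A ** B)) = A *v (\<Sum>j\<in>UNIV. column j B)"
  using linear_sum[OF matrix_vector_mul_linear[of A], of "\<lambda>j. column j B" UNIV]
  by (simp add: column_matrix_mult o_def)

lemma card_columns_Collect:
  assumes "inj (\<lambda>j. column j A)"
  shows "card {j. P (column j A)} = card {x \<in> columns A. P x}"
proof -
  have "{x \<in> columns A. P x} = (\<lambda>j. column j A) ` {j. P (column j A)}"
    by (auto simp: columns_def)
  then show ?thesis
    using assms by (simp add: card_image inj_on_subset)
qed

lemma columns_subset_convex_hull_stochastic:
  fixes W :: "real^'r^'m" and H :: "real^'n^'r"
  assumes "\<forall>j. (\<forall>i. H $ i $ j \<ge> 0) \<and> (\<Sum>i\<in>UNIV. H $ i $ j) = 1"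
  shows "columns (W ** H) \<subseteq> convex hull (columns W)"
proof
  fix x
  assume "x \<in> columns (W ** H)"
  then obtain j where "x = column j (W ** H)"
    by (auto simp: columns_def)
  also have "\<dots> = (\<Sum>i\<in>UNIV. H $ i $ j *\<^sub>R column i W)"
    by (simp add: column_def matrix_matrix_mult_def vec_eq_iff sum_component mult.commute)
  also have "\<dots> \<in> convex hull (columns W)"
    by (rule convex_sum) (use assms in \<open>auto simp: columns_def intro: hull_inc\<close>)
  finally show "x \<in> convex hull (columns W)" .
qed

lemma extreme_point_of_convex_hull_columns:
  assumes "column k W \<notin> convex hull ((\<lambda>l. column l W) ` (UNIV - {k}))"
  shows "column k W extreme_point_of convex hull (columns W)"
proof -
  have "columns W = insert (column k W) ((\<lambda>l. column l W) ` (UNIV - {k}))"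
    by (auto simp: columns_def)
  then show ?thesis
    using extreme_point_of_convex_hull_insert[OF _ assms] by simp
qed

lemma zero_in_convex_hull_columns:
  fixes M :: "real^'n^'m"
  assumes "(\<Sum>j\<in>UNIV. column j M) = 0"
  shows "0 \<in> convex hull (columns M)"
proof -
  have "(\<Sum>j\<in>UNIV. (1 / real CARD('n)) *\<^sub>R column j M) \<in> convex hull (columns M)"
    by (rule convex_sum) (auto simp: columns_def intro: hull_inc)
  then show ?thesis
    by (simp add: assms flip: scaleR_sum_right)
qed

lemma sum_columns_centred:
  fixes X :: "real^'n^'m"
  shows "(\<Sum>j\<in>UNIV. column j (X - (\<chi> i k. (\<Sum>l\<in>UNIV. X $ i $ l) / real CARD('n)))) = 0"
  by (simp add: vec_eq_iff sum_component column_def sum_subtractf)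

lemma columns_subset_range_if_factorization:
  fixes A :: "real^'n^'m" and U :: "real^'k^'m"
  assumes "A - (\<chi> i k. c $ i) = U ** B"
  shows "columns A \<subseteq> range (\<lambda>z. c + U *v z)"
proof
  fix a
  assume "a \<in> columns A"
  then obtain j where "a = column j A"
    by (auto simp: columns_def)
  also have "\<dots> = c + column j (A - (\<chi> i k. c $ i))"
    by (simp add: column_diff column_constant)
  also have "\<dots> = c + U *v column j B"
    by (simp add: assms column_matrix_mult)
  finally show "a \<in> range (\<lambda>z. c + U *v z)"
    by blast
qed

lemma column_eq_affine_image_of_projection:
  fixes A :: "real^'n^'m" and U :: "real^'k^'m"
  assumes "transpose U ** U = mat 1" and "column j A \<in> range (\<lambda>z. c + U *v z)"
  shows "column j A = c + U *v column j (transpose U ** (A - (\<chi> i k. c $ i)))"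
proof -
  obtain z where z: "column j A = c + U *v z"
    using assms(2) by blast
  have "column j (transpose U ** (A - (\<chi> i k. c $ i))) = transpose U *v (U *v z)"
    by (simp add: column_matrix_mult column_diff column_constant z)
  also have "\<dots> = z"
    by (simp add: matrix_vector_mul_assoc assms(1))
  finally show ?thesis
    using z by simp
qed

lemma columns_eq_affine_image_of_projection:
  fixes A :: "real^'n^'m" and U :: "real^'k^'m"
  assumes "transpose U ** U = mat 1" and "columns A \<subseteq> range (\<lambda>z. c + U *v z)"
  shows "columns A = (\<lambda>z. c + U *v z) ` columns (transpose U ** (A - (\<chi> i k. c $ i)))"
proof -
  have "column j A = c + U *v column j (transpose U ** (A - (\<chi> i k. c $ i)))" for j
    using assms by (intro column_eq_affine_image_of_projection) (auto simp: columns_def)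
  then show ?thesis
    by (simp add: columns_eq_range image_image)
qed

lemma inj_columns_projection:
  fixes A :: "real^'n^'m" and U :: "real^'k^'m"
  assumes "transpose U ** U = mat 1" and "columns A \<subseteq> range (\<lambda>z. c + U *v z)"
    and "inj (\<lambda>j. column j A)"
  shows "inj (\<lambda>j. column j (transpose U ** (A - (\<chi> i k. c $ i))))"
proof -
  have "column j A = c + U *v column j (transpose U ** (A - (\<chi> i k. c $ i)))" for j
    using assms(1,2) by (intro column_eq_affine_image_of_projection) (auto simp: columns_def)
  then show ?thesis
    using assms(3) by (metis (mono_tags, lifting) injD injI)
qed

lemma inj_matrix_vector_mult_if_left_inverse:
  fixes U :: "real^'k^'m" and L :: "real^'m^'k"
  assumes "L ** U = mat 1"
  shows "inj ((*v) U)"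
  using assms by (metis inj_on_inverseI matrix_vector_mul_assoc matrix_vector_mul_lid)

lemma rank_transpose_mult_eq:
  fixes U :: "real^'k^'m" and B :: "real^'n^'k"
  assumes "transpose U ** U = mat 1"
  shows "rank (transpose U ** (U ** B)) = rank (U ** B)"
proof -
  have "transpose U ** (U ** B) = B"
    by (simp add: matrix_mul_assoc assms)
  then show ?thesis
    using rank_mul_le_right[of U B] rank_mul_le_right[of "transpose U" "U ** B"] by simp
qed

lemma span_columns_eq_UNIV:
  fixes A :: "real^'n^'k"
  assumes "rank A = CARD('k)"
  shows "span (columns A) = UNIV"
  using assms by (simp add: column_rank_def flip: dim_eq_full)

lemma FBC_facet_conditions: "FBC X W H s \<Longrightarrow> facet_conditions s (columns X) (columns W)"
  unfolding FBC_def facet_conditions_def by blast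

lemma FBC_columns_subset_convex_hull:
  assumes "FBC X W H s"
  shows "columns X \<subseteq> convex hull (columns W)"
proof -
  from assms have "X = W ** H" and "\<forall>j. (\<forall>i. H $ i $ j \<ge> 0) \<and> (\<Sum>i\<in>UNIV. H $ i $ j) = 1"
    by (simp_all add: FBC_def)
  then show ?thesis
    using columns_subset_convex_hull_stochastic by simp
qed

lemma FBC_columns_subset_affine_hull:
  assumes "FBC X W H s"
  shows "columns W \<subseteq> affine hull (columns X)"
proof
  fix w
  assume "w \<in> columns W"
  then obtain k where "w = column k W"
    by (auto simp: columns_def)
  moreover have "column k W extreme_point_of convex hull (columns W)"
    using assms by (intro extreme_point_of_convex_hull_columns) (simp add: FBC_def)
  ultimately show "w \<in> affine hull (columns X)"
    using extreme_point_in_affine_hull[OF _ _ FBC_columns_subset_convex_hull[OF assms]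
        FBC_facet_conditions[OF assms]]
    by (auto simp: columns_eq_range)
qed

theorem lemma3:
  fixes X :: "real^'n^'m" and W :: "real^'r^'m" and H :: "real^'n^'r"
    and U :: "real^'k^'m" and \<Sigma> :: "real^'k^'k" and V :: "real^'k^'n"
    and s :: nat and \<theta> :: "real^'k"
  assumes X_nonneg: "\<forall>i j. X $ i $ j \<ge> 0"
    and fbc: "FBC X W H s"
    and no_dup: "inj (\<lambda>j. column j X)"
    and dim_k: "CARD('k) = rank X - 1"
    and rank_c: "rank (X - (\<chi> i j. (\<Sum>l\<in>UNIV. X $ i $ l) / real CARD('n))) = rank X - 1"
    and U_orth: "transpose U ** U = mat 1"
    and V_orth: "transpose V ** V = mat 1"
    and \<Sigma>_diag: "\<forall>i j. i \<noteq> j \<longrightarrow> \<Sigma> $ i $ j = 0"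
    and \<Sigma>_pos: "\<forall>i. \<Sigma> $ i $ i > 0"
    and svd: "X - (\<chi> i j. (\<Sum>l\<in>UNIV. X $ i $ l) / real CARD('n)) = U ** \<Sigma> ** transpose V"
  shows "{x \<in> convex hull (columns (transpose U ** (W - (\<chi> i k. (\<Sum>l\<in>UNIV. X $ i $ l) / real CARD('n))))).
            \<theta> \<bullet> x = 1}
           facet_of convex hull (columns (transpose U ** (W - (\<chi> i k. (\<Sum>l\<in>UNIV. X $ i $ l) / real CARD('n)))))
     \<longleftrightarrow>
     \<theta> extreme_point_of dual_set (convex hull (columns (transpose U ** (X - (\<chi> i j. (\<Sum>l\<in>UNIV. X $ i $ l) / real CARD('n)))))) \<and>
     card {j. column j (transpose U ** (X - (\<chi> i j. (\<Sum>l\<in>UNIV. X $ i $ l) / real CARD('n)))) \<bullet> \<theta> = 1} \<ge> s"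
proof -
  define x\<^sub>0 :: "real^'m" where "x\<^sub>0 = (\<chi> i. (\<Sum>l\<in>UNIV. X $ i $ l) / real CARD('n))"
  define g where "g = (\<lambda>z. x\<^sub>0 + U *v z)"
  define Xt where "Xt = transpose U ** (X - (\<chi> i j. x\<^sub>0 $ i))"
  define Wt :: "real^'r^'k" where "Wt = transpose U ** (W - (\<chi> i j. x\<^sub>0 $ i))"
  have centred: "X - (\<chi> i j. x\<^sub>0 $ i) = U ** (\<Sigma> ** transpose V)"
    using svd by (simp add: x\<^sub>0_def matrix_mul_assoc)
  have X_range: "columns X \<subseteq> range g"
    unfolding g_def by (rule columns_subset_range_if_factorization[OF centred])
  moreover have "affine (range g)"
    unfolding g_def by (rule affine_range_affine_map) simp
  ultimately have W_range: "columns W \<subseteq> range g"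
    using FBC_columns_subset_affine_hull[OF fbc] hull_minimal by blast
  have images: "columns X = g ` columns Xt" "columns W = g ` columns Wt"
    using columns_eq_affine_image_of_projection[OF U_orth X_range[unfolded g_def]]
      columns_eq_affine_image_of_projection[OF U_orth W_range[unfolded g_def]]
    by (simp_all add: g_def Xt_def Wt_def)
  have "inj (\<lambda>j. column j Xt)"
    using inj_columns_projection[OF U_orth X_range[unfolded g_def] no_dup] by (simp add: Xt_def)
  have "0 \<in> convex hull (columns Xt)"
    using sum_columns_centred[of X]
    by (intro zero_in_convex_hull_columns) (simp add: Xt_def x\<^sub>0_def sum_columns_matrix_mult)
  moreover have "span (columns Xt) = UNIV"
    using rank_transpose_mult_eq[OF U_orth, of "\<Sigma> ** transpose V"] centred rank_c dim_k
    by (intro span_columns_eq_UNIV) (simp add: Xt_def x\<^sub>0_def)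
  ultimately have "{x \<in> convex hull (columns Wt). \<theta> \<bullet> x = 1} facet_of convex hull (columns Wt) \<longleftrightarrow>
      \<theta> extreme_point_of dual_set (convex hull (columns Xt)) \<and> s \<le> card {p \<in> columns Xt. p \<bullet> \<theta> = 1}"
    using FBC_columns_subset_convex_hull[OF fbc] FBC_facet_conditions[OF fbc]
      inj_matrix_vector_mult_if_left_inverse[OF U_orth]
    unfolding images g_def by (intro facet_of_iff_polar_vertex_affine_image) (auto simp: columns_eq_range)
  then show ?thesis
    using card_columns_Collect[OF \<open>inj (\<lambda>j. column j Xt)\<close>, of "\<lambda>p. p \<bullet> \<theta> = 1"]
    by (simp add: Xt_def Wt_def x\<^sub>0_def)
qed

end
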